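(* Let $q$, $\phi,\theta$ and $U_1=(P_1,Q_1,R_1)^T$ be as in the context and $\lambda\in(0,\infty)$. Then (i) $4P_1(x,\lambda)R_1(x,\lambda)-Q_1(x,\lambda)^2=4$ for all $x>0$; (ii) if $U_1=a^*((\theta')^2,-2\theta\theta',\theta^2)^T+b^*(\theta'\phi',-(\theta\phi'+\theta'\phi),\theta\phi)^T+c^*((\phi')^2,-2\phi\phi',\phi^2)^T$ with real $a^*,b^*,c^*$, then $4a^*c^*-(b^* )^2=4$.
   Context: $-y''+qy=\lambda y$ on $(0,\infty)$, $q(x)=\frac{q_0}{x^2}+\frac{q_1}{x}+\sum_{n\ge0}q_{n+2}x^n$ with real coefficients, series convergent on $(0,\infty)$, $q_0\ge-\tfrac14$, $q_0,q_1$ not both zero, $q(x)\to0$ as $x\to\infty$, and for some $x_0>0$ either $q\in L_1(x_0,\infty)$ or ($q'\in L_1(x_0,\infty)$, $q\in AC_{loc}[x_0,\infty)$). $\phi,\theta$ are the Frobenius solutions at $0$: with $q_0=\nu^2-\tfrac14$, $\nu\ge0$, $\phi=y_1$ is the Frobenius solution $x^{r}(1+\sum_{n\ge1}a_n(\lambda)x^n)$ for the larger indicial root $r=\tfrac12+\nu$, $y_2$ is a second (possibly logarithmic) Frobenius solution with leading coefficient $1$ and coefficients real polynomials in $\lambda$ (as given by the Frobenius method), $C=W(y_1,y_2)$ is the nonzero real constant Wronskian ($-2\nu$, $-(2\ell+1)$ when $q_0=\ell(\ell+1)$, $-2N$ when $q_0=N^2-\frac14$, $N\ge1$, or $1$ when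 $q_0=-\frac14$), and $\theta=y_2/C$, so $W(\phi,\theta)=\phi\theta'-\phi'\theta=1$. Appell system: $(P,Q,R)'=M(P,Q,R)^T$ with $M=\begin{pmatrix}0&\lambda-q&0\\-2&0&2(\lambda-q)\\0&-1&0\end{pmatrix}$; $U_1$ is its unique solution with $\lim_{x\to\infty}U_1=(\sqrt\lambda,0,1/\sqrt\lambda)^T$. *)

theory Defs
  imports "HOL-Analysis.Analysis"
begin

definition abs_continuous_on :: "real \<Rightarrow> real \<Rightarrow> (real \<Rightarrow> real) \<Rightarrow> bool" where
  "abs_continuous_on a b f \<longleftrightarrow>
     (\<forall>\<epsilon>>0. \<exists>\<delta>>0. \<forall>(n::nat) (u::nat \<Rightarrow> real) v.
        (\<forall>i<n. a \<le> u i \<and> u i < v i \<and> v i \<le> b) \<longrightarrow>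
        (\<forall>i<n. \<forall>j<n. i \<noteq> j \<longrightarrow> v i \<le> u j \<or> v j \<le> u i) \<longrightarrow>
        (\<Sum>i<n. v i - u i) < \<delta> \<longrightarrow> (\<Sum>i<n. \<bar>f (v i) - f (u i)\<bar>) < \<epsilon>)"

text \<open>Standing hypotheses on the potential q with Laurent-type coefficients q0, q1 and
  c n = q_(n+2).\<close>
definition potential_hyp :: "(real \<Rightarrow> real) \<Rightarrow> real \<Rightarrow> real \<Rightarrow> (nat \<Rightarrow> real) \<Rightarrow> bool" where
  "potential_hyp q q0 q1 c \<longleftrightarrow>
     (\<forall>x>0. summable (\<lambda>n. c n * x ^ n) \<and>
            q x = q0 / x\<^sup>2 + q1 / x + (\<Sum>n. c n * x ^ n)) \<and>
     q0 \<ge> -1/4 \<and> (q0 \<noteq> 0 \<or> q1 \<noteq> 0) \<and>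
     (q \<longlongrightarrow> 0) at_top \<and>
     (\<exists>x0>0. set_integrable lborel {x0..} q \<or>
        (set_integrable lborel {x0..} (deriv q) \<and> (\<forall>b>x0. abs_continuous_on x0 b q)))"

definition is_solution :: "(real \<Rightarrow> real) \<Rightarrow> real \<Rightarrow> (real \<Rightarrow> real) \<Rightarrow> bool" where
  "is_solution q lam y \<longleftrightarrow>
     (\<forall>x>0. (y has_real_derivative deriv y x) (at x) \<and>
            (deriv y has_real_derivative ((q x - lam) * y x)) (at x))"

text \<open>nu >= 0 with q0 = nu^2 - 1/4.\<close>
definition frob_nu :: "real \<Rightarrow> real" where
  "frob_nu q0 = sqrt (q0 + 1/4)"

definition is_frob_phi :: "(real \<Rightarrow> real) \<Rightarrow> real \<Rightarrow> real \<Rightarrow> (real \<Rightarrow> real) \<Rightarrow> bool" where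
  "is_frob_phi q q0 lam \<phi> \<longleftrightarrow> is_solution q lam \<phi> \<and>
     (\<exists>a::nat \<Rightarrow> real. \<forall>x>0. summable (\<lambda>n. a n * x ^ (n+1)) \<and>
        \<phi> x = x powr (1/2 + frob_nu q0) * (1 + (\<Sum>n. a n * x ^ (n+1))))"

text \<open>For nu > 0:  y2 = x^(1/2-nu) (1 + sum_(n>=1) b_n x^n) + kappa phi ln x
  (kappa = 0 is forced unless 2 nu is an integer).\<close>
definition is_frob_y2 :: "(real \<Rightarrow> real) \<Rightarrow> real \<Rightarrow> real \<Rightarrow> (real \<Rightarrow> real) \<Rightarrow> (real \<Rightarrow> real) \<Rightarrow> bool" where
  "is_frob_y2 q q0 lam \<phi> y2 \<longleftrightarrow> is_solution q lam y2 \<and>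
     (\<exists>(b::nat \<Rightarrow> real) \<kappa>. \<forall>x>0. summable (\<lambda>n. b n * x ^ (n+1)) \<and>
        (if frob_nu q0 = 0
         then y2 x = \<phi> x * ln x + x powr (1/2) * (\<Sum>n. b n * x ^ (n+1))
         else y2 x = x powr (1/2 - frob_nu q0) * (1 + (\<Sum>n. b n * x ^ (n+1)))
                     + \<kappa> * \<phi> x * ln x))"

text \<open>The Wronskian constant C = W(y1,y2).\<close>
definition frob_C :: "real \<Rightarrow> real" where
  "frob_C q0 = (if frob_nu q0 = 0 then 1 else - 2 * frob_nu q0)"

definition appell_solution :: "(real \<Rightarrow> real) \<Rightarrow> real \<Rightarrow> (real \<Rightarrow> real) \<Rightarrow> (real \<Rightarrow> real) \<Rightarrow> (real \<Rightarrow> real) \<Rightarrow> bool" where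
  "appell_solution q lam P Q R \<longleftrightarrow>
     (\<forall>x>0. (P has_real_derivative ((lam - q x) * Q x)) (at x) \<and>
            (Q has_real_derivative (-2 * P x + 2 * (lam - q x) * R x)) (at x) \<and>
            (R has_real_derivative (- Q x)) (at x))"

end

theory Submission
  imports Defs
begin

text \<open>Both parts rest on conserved quantities. Along the Appell system the discriminant
  4PR - Q^2 has derivative 0, so it is constant, and its value is read off at infinity:
  4 \<surd>\<lambda> (1/\<surd>\<lambda>) - 0 = 4. If (P,Q,R) is the given combination of products of \<theta> and \<phi>,
  the discriminant factorises as (4ac - b^2) W(\<theta>,\<phi>)^2, and W(\<theta>,\<phi>) = -W(\<phi>,y2)/C = -1:
  the Wronskian of two solutions is constant, and evaluating it through the Frobenius
  expansions as x \<rightarrow> 0+ gives exactly C, the logarithmic term contributing 1 precisely when \<nu> = 0.\<close>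

definition wronskian :: "(real \<Rightarrow> real) \<Rightarrow> (real \<Rightarrow> real) \<Rightarrow> real \<Rightarrow> real" where
  "wronskian f g x = f x * deriv g x - deriv f x * g x"

lemma zero_derivative_constant_on_pos:
  fixes f :: "real \<Rightarrow> real"
  assumes "\<And>x. x > 0 \<Longrightarrow> (f has_real_derivative 0) (at x)"
  obtains k where "\<forall>x>0. f x = k"
proof -
  have "\<exists>k. \<forall>x\<in>{0<..}. f x = k"
    using assms by (intro has_field_derivative_zero_constant) (auto intro: has_field_derivative_at_within)
  then show ?thesis using that by auto
qed

lemma constant_on_pos_limit_unique:
  fixes f :: "real \<Rightarrow> real"
  assumes "\<forall>x>0. f x = k" and "(f \<longlongrightarrow> l) F" and "F \<noteq> bot"
    and "\<forall>\<^sub>F x in F. x > 0"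
  shows "k = l"
proof -
  have "(f \<longlongrightarrow> k) F"
    using assms(1,4) by (intro Lim_transform_eventually[OF tendsto_const]) (auto elim: eventually_mono)
  then show ?thesis using assms(2,3) tendsto_unique by blast
qed

lemma appell_discriminant_constant:
  assumes "appell_solution q lam P Q R"
    and "(P \<longlongrightarrow> p) at_top" and "(Q \<longlongrightarrow> q') at_top" and "(R \<longlongrightarrow> r) at_top"
  shows "\<forall>x>0. 4 * P x * R x - (Q x)\<^sup>2 = 4 * p * r - q'\<^sup>2"
proof -
  have "((\<lambda>x. 4 * P x * R x - (Q x)\<^sup>2) has_real_derivative 0) (at x)" if "x > 0" for x
  proof -
    from that assms(1) have P': "(P has_real_derivative ((lam - q x) * Q x)) (at x)"
      and Q': "(Q has_real_derivative (-2 * P x + 2 * (lam - q x) * R x)) (at x)"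
      and R': "(R has_real_derivative (- Q x)) (at x)"
      by (auto simp: appell_solution_def)
    show ?thesis
      using DERIV_diff[OF DERIV_mult[OF DERIV_cmult[OF P', of 4] R'] DERIV_power[OF Q', of 2]]
      by (simp add: algebra_simps)
  qed
  then obtain k where k: "\<forall>x>0. 4 * P x * R x - (Q x)\<^sup>2 = k"
    by (rule zero_derivative_constant_on_pos)
  have "((\<lambda>x. 4 * P x * R x - (Q x)\<^sup>2) \<longlongrightarrow> 4 * p * r - q'\<^sup>2) at_top"
    using assms(2-4) by (intro tendsto_intros)
  then have "k = 4 * p * r - q'\<^sup>2"
    using k by (intro constant_on_pos_limit_unique) (auto intro: eventually_gt_at_top)
  with k show ?thesis by simp
qed

lemma wronskian_constant:
  assumes "is_solution q lam f" and "is_solution q lam g"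
  obtains k where "\<forall>x>0. wronskian f g x = k"
proof (rule zero_derivative_constant_on_pos)
  fix x :: real
  assume "x > 0"
  with assms have f': "(f has_real_derivative deriv f x) (at x)"
    and f'': "(deriv f has_real_derivative ((q x - lam) * f x)) (at x)"
    and g': "(g has_real_derivative deriv g x) (at x)"
    and g'': "(deriv g has_real_derivative ((q x - lam) * g x)) (at x)"
    by (auto simp: is_solution_def)
  show "(wronskian f g has_real_derivative 0) (at x)"
    unfolding wronskian_def[abs_def]
    using DERIV_diff[OF DERIV_mult[OF f' g''] DERIV_mult[OF f'' g']] by (simp add: algebra_simps)
qed

lemma shifted_powser_has_derivative:
  fixes a :: "nat \<Rightarrow> real"
  assumes "\<forall>x>0. summable (\<lambda>n. a n * x ^ (n+1))"
  obtains S' where "\<And>x. ((\<lambda>x. \<Sum>n. a n * x ^ (n+1)) has_real_derivative S' x) (at x)"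
    and "isCont S' 0"
proof -
  have summ: "summable (\<lambda>n. a n * y ^ n)" for y
  proof -
    have "summable (\<lambda>n. (\<bar>y\<bar> + 1) * (a n * (\<bar>y\<bar> + 1) ^ n))"
      using assms[rule_format, of "\<bar>y\<bar> + 1"] by (simp add: algebra_simps)
    then have "summable (\<lambda>n. a n * (\<bar>y\<bar> + 1) ^ n)"
      by (simp add: summable_cmult_iff add_nonneg_eq_0_iff)
    then show ?thesis by (rule powser_inside) auto
  qed
  define A where "A x = (\<Sum>n. a n * x ^ n)" for x :: real
  define A' where "A' x = (\<Sum>n. diffs a n * x ^ n)" for x :: real
  have A: "(A has_real_derivative A' x) (at x)" for x
    unfolding A_def[abs_def] A'_def by (intro termdiffs_strong_converges_everywhere summ)
  have "(A' has_real_derivative (\<Sum>n. diffs (diffs a) n * x ^ n)) (at x)" for x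
    unfolding A'_def[abs_def] by (intro termdiffs_strong_converges_everywhere termdiff_converges_all summ)
  then have "isCont A' 0" by (rule DERIV_isCont)
  moreover have "(\<Sum>n. a n * x ^ (n+1)) = x * A x" for x
    using suminf_mult[OF summ[of x], of x] by (simp add: A_def algebra_simps)
  ultimately show ?thesis
    using that[of "\<lambda>x. A x + x * A' x"] DERIV_mult[OF DERIV_ident A] DERIV_isCont[OF A]
    by (auto intro!: continuous_intros simp: algebra_simps)
qed

lemma deriv_eq_if_eq_on_pos:
  fixes f g :: "real \<Rightarrow> real"
  assumes "\<forall>y>0. f y = g y" and "x > 0" and "(g has_real_derivative D) (at x)"
  shows "deriv f x = D"
proof -
  have "(f has_real_derivative D) (at x)"
    using assms(3) by (rule has_field_derivative_transform_within_open[where S = "{0<..}"])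
      (use assms(1,2) in auto)
  then show ?thesis by (rule DERIV_imp_deriv)
qed

lemma wronskian_powr_log_identity:
  fixes x r s \<kappa> F F' H H' :: real
  assumes "x > 0" and "r + s = 1"
  shows "(x powr r * F) * ((s * x powr (s - 1) * H + x powr s * H')
            + \<kappa> * ((r * x powr (r - 1) * F + x powr r * F') * ln x + x powr r * F / x))
         - (r * x powr (r - 1) * F + x powr r * F') * (x powr s * H + \<kappa> * (x powr r * F) * ln x)
       = (s - r) * F * H + x * (F * H' - F' * H) + \<kappa> * x powr (2 * r - 1) * F\<^sup>2"
proof -
  define u v where "u = x powr r" and "v = x powr s"
  have uv: "u > 0" "v > 0" "x = u * v"
    using assms by (simp_all add: u_def v_def flip: powr_add)
  have pow: "x powr (r - 1) = u / x" "x powr (s - 1) = v / x" "x powr (2 * r - 1) = u * u / x"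
    using assms(1) by (simp_all add: u_def v_def powr_diff flip: powr_add)
  have "s = 1 - r" using assms(2) by simp
  then show ?thesis
    unfolding pow u_def[symmetric] v_def[symmetric] unfolding uv(3) using uv(1,2)
    by (simp add: field_simps power2_eq_square)
qed

lemma powr_tendsto_at_right_0:
  fixes e :: real
  assumes "e \<ge> 0"
  shows "((\<lambda>x. x powr e) \<longlongrightarrow> (if e = 0 then 1 else 0)) (at_right 0)"
proof (cases "e = 0")
  case True
  have "\<forall>\<^sub>F x in at_right (0::real). 1 = x powr e"
    using eventually_at_right_less[of 0] True by (auto elim: eventually_mono)
  with True show ?thesis by (simp add: Lim_transform_eventually[OF tendsto_const])
next
  case False
  have "((\<lambda>x. x powr e) \<longlongrightarrow> 0) (at_right 0)"
    using assms False
    by (intro tendsto_zero_powrI tendsto_ident_at tendsto_const)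
      (auto intro: eventually_mono[OF eventually_at_right_less])
  with False show ?thesis by simp
qed

lemma wronskian_powr_log_tendsto:
  fixes u v F F' H H' :: "real \<Rightarrow> real" and r s \<kappa> :: real
  assumes rs: "r + s = 1" "r \<ge> 1/2"
    and F: "\<And>x. (F has_real_derivative F' x) (at x)" "isCont F' 0"
    and H: "\<And>x. (H has_real_derivative H' x) (at x)" "isCont H' 0"
    and u: "\<forall>x>0. u x = x powr r * F x"
    and v: "\<forall>x>0. v x = x powr s * H x + \<kappa> * u x * ln x"
  shows "(wronskian u v \<longlongrightarrow> (s - r) * F 0 * H 0 + \<kappa> * (if r = 1/2 then (F 0)\<^sup>2 else 0))
           (at_right 0)"
proof -
  have du: "deriv u x = r * x powr (r - 1) * F x + x powr r * F' x" if "x > 0" for x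
  proof (rule deriv_eq_if_eq_on_pos[OF u that])
    show "((\<lambda>x. x powr r * F x) has_real_derivative r * x powr (r - 1) * F x + x powr r * F' x) (at x)"
      using DERIV_mult[OF has_real_derivative_powr[OF that, of r] F(1)] by (simp add: algebra_simps)
  qed
  have dv: "deriv v x = (s * x powr (s - 1) * H x + x powr s * H' x)
      + \<kappa> * ((r * x powr (r - 1) * F x + x powr r * F' x) * ln x + x powr r * F x / x)"
    if "x > 0" for x
  proof -
    have "((\<lambda>x. x powr s * H x + \<kappa> * (x powr r * F x) * ln x) has_real_derivative
        (s * x powr (s - 1) * H x + x powr s * H' x)
        + \<kappa> * ((r * x powr (r - 1) * F x + x powr r * F' x) * ln x + x powr r * F x / x)) (at x)"
      using DERIV_add[OF DERIV_mult[OF has_real_derivative_powr[OF that, of s] H(1)]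
          DERIV_cmult[OF DERIV_mult[OF DERIV_mult[OF has_real_derivative_powr[OF that, of r] F(1)]
              DERIV_ln_divide[OF that]], of \<kappa>]]
      by (simp add: algebra_simps)
    moreover have "\<forall>y>0. v y = y powr s * H y + \<kappa> * (y powr r * F y) * ln y"
      using u v by simp
    ultimately show ?thesis by (intro deriv_eq_if_eq_on_pos[OF _ that])
  qed
  have W: "wronskian u v x
      = (s - r) * F x * H x + x * (F x * H' x - F' x * H x) + \<kappa> * x powr (2 * r - 1) * (F x)\<^sup>2"
    if "x > 0" for x
    unfolding wronskian_def du[OF that] dv[OF that] u[rule_format, OF that] v[rule_format, OF that]
    by (rule wronskian_powr_log_identity[OF that rs(1)])
  have at0: "(f \<longlongrightarrow> f 0) (at_right 0)" if "isCont f 0" for f :: "real \<Rightarrow> real"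
    using that unfolding isCont_def by (rule tendsto_mono[OF at_within_le_at])
  have "2 * r - 1 = 0 \<longleftrightarrow> r = 1/2" by auto
  then have pw: "((\<lambda>x. x powr (2 * r - 1)) \<longlongrightarrow> (if r = 1/2 then 1 else 0)) (at_right 0)"
    using powr_tendsto_at_right_0[of "2 * r - 1"] rs(2) by simp
  have "((\<lambda>x. (s - r) * F x * H x + x * (F x * H' x - F' x * H x) + \<kappa> * x powr (2 * r - 1) * (F x)\<^sup>2)
      \<longlongrightarrow> (s - r) * F 0 * H 0 + 0 * (F 0 * H' 0 - F' 0 * H 0) + \<kappa> * (if r = 1/2 then 1 else 0) * (F 0)\<^sup>2)
      (at_right 0)"
    by (intro tendsto_intros pw at0[OF F(2)] at0[OF H(2)]
        at0[OF DERIV_isCont[OF F(1)]] at0[OF DERIV_isCont[OF H(1)]])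
  then have lim: "((\<lambda>x. (s - r) * F x * H x + x * (F x * H' x - F' x * H x)
      + \<kappa> * x powr (2 * r - 1) * (F x)\<^sup>2)
      \<longlongrightarrow> (s - r) * F 0 * H 0 + \<kappa> * (if r = 1/2 then (F 0)\<^sup>2 else 0)) (at_right 0)"
    by (rule tendsto_eq_rhs) simp
  show ?thesis
    by (rule Lim_transform_eventually[OF lim])
      (auto simp: W intro: eventually_mono[OF eventually_at_right_less])
qed

lemma wronskian_frobenius:
  assumes q0: "q0 \<ge> -1/4"
    and phi: "is_frob_phi q q0 lam \<phi>" and y2: "is_frob_y2 q q0 lam \<phi> y2"
  shows "\<forall>x>0. wronskian \<phi> y2 x = frob_C q0"
proof -
  define \<nu> where "\<nu> = frob_nu q0"
  have "\<nu> \<ge> 0" using q0 by (simp add: \<nu>_def frob_nu_def)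
  obtain a where a: "\<forall>x>0. summable (\<lambda>n. a n * x ^ (n+1)) \<and>
      \<phi> x = x powr (1/2 + \<nu>) * (1 + (\<Sum>n. a n * x ^ (n+1)))"
    using phi[unfolded is_frob_phi_def, folded \<nu>_def] by (elim conjE exE) (rule that)
  obtain b \<kappa> where b: "\<forall>x>0. summable (\<lambda>n. b n * x ^ (n+1)) \<and>
      (if \<nu> = 0 then y2 x = \<phi> x * ln x + x powr (1/2) * (\<Sum>n. b n * x ^ (n+1))
       else y2 x = x powr (1/2 - \<nu>) * (1 + (\<Sum>n. b n * x ^ (n+1))) + \<kappa> * \<phi> x * ln x)"
    using y2[unfolded is_frob_y2_def, folded \<nu>_def] by (elim conjE exE) (rule that)
  have "\<forall>x>0. summable (\<lambda>n. a n * x ^ (n+1))" "\<forall>x>0. summable (\<lambda>n. b n * x ^ (n+1))"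
    using a b by blast+
  note summable = this
  obtain A' where A: "\<And>x. ((\<lambda>x. \<Sum>n. a n * x ^ (n+1)) has_real_derivative A' x) (at x)"
    "isCont A' 0"
    by (rule shifted_powser_has_derivative[OF summable(1)]) (rule that)
  obtain B' where B: "\<And>x. ((\<lambda>x. \<Sum>n. b n * x ^ (n+1)) has_real_derivative B' x) (at x)"
    "isCont B' 0"
    by (rule shifted_powser_has_derivative[OF summable(2)]) (rule that)
  \<comment> \<open>Both cases take the form y2 = x powr (1/2 - \<nu>) * H + \<kappa>' * \<phi> * ln x; for \<nu> = 0 the
    factor H has no constant term and \<kappa>' = 1.\<close>
  define F where "F x = 1 + (\<Sum>n. a n * x ^ (n+1))" for x
  define H where "H x = (if \<nu> = 0 then 0 else 1) + (\<Sum>n. b n * x ^ (n+1))" for x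
  define \<kappa>' where "\<kappa>' = (if \<nu> = 0 then 1 else \<kappa>)"
  have "(wronskian \<phi> y2 \<longlongrightarrow> ((1/2 - \<nu>) - (1/2 + \<nu>)) * F 0 * H 0
      + \<kappa>' * (if 1/2 + \<nu> = 1/2 then (F 0)\<^sup>2 else 0)) (at_right 0)"
  proof (rule wronskian_powr_log_tendsto)
    show "(F has_real_derivative A' x) (at x)" "(H has_real_derivative B' x) (at x)" for x
      unfolding F_def[abs_def] H_def[abs_def] using A(1) B(1) by (auto intro!: derivative_eq_intros)
    show "\<forall>x>0. \<phi> x = x powr (1/2 + \<nu>) * F x" using a by (simp add: F_def)
    show "\<forall>x>0. y2 x = x powr (1/2 - \<nu>) * H x + \<kappa>' * \<phi> x * ln x"
      using b by (simp add: H_def \<kappa>'_def split: if_splits)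
  qed (use A(2) B(2) \<open>\<nu> \<ge> 0\<close> in auto)
  moreover have "F 0 = 1" "H 0 = (if \<nu> = 0 then 0 else 1)"
    by (simp_all add: F_def H_def)
  ultimately have lim: "(wronskian \<phi> y2 \<longlongrightarrow> frob_C q0) (at_right 0)"
    by (auto elim: tendsto_eq_rhs simp: \<kappa>'_def frob_C_def \<nu>_def)
  obtain k where k: "\<forall>x>0. wronskian \<phi> y2 x = k"
    using phi y2 unfolding is_frob_phi_def is_frob_y2_def by (meson wronskian_constant)
  have "k = frob_C q0"
    using k lim by (rule constant_on_pos_limit_unique) (auto intro: eventually_at_right_less)
  with k show ?thesis by simp
qed

lemma wronskian_theta_phi:
  assumes "q0 \<ge> -1/4"
    and phi: "is_frob_phi q q0 lam \<phi>" and y2: "is_frob_y2 q q0 lam \<phi> y2"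
    and theta: "\<theta> = (\<lambda>x. y2 x / frob_C q0)"
  shows "\<forall>x>0. wronskian \<theta> \<phi> x = -1"
proof (intro allI impI)
  fix x :: real
  assume "x > 0"
  have C: "frob_C q0 \<noteq> 0"
    using assms(1) by (simp add: frob_C_def frob_nu_def)
  have "(y2 has_real_derivative deriv y2 x) (at x)"
    using y2 \<open>x > 0\<close> by (simp add: is_frob_y2_def is_solution_def)
  then have "deriv \<theta> x = deriv y2 x / frob_C q0"
    unfolding theta by (intro DERIV_imp_deriv DERIV_cdivide)
  then have "wronskian \<theta> \<phi> x = - wronskian \<phi> y2 x / frob_C q0"
    unfolding wronskian_def using C by (simp add: theta field_simps)
  then show "wronskian \<theta> \<phi> x = -1"
    using wronskian_frobenius[OF assms(1) phi y2] \<open>x > 0\<close> C by simp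
qed

lemma quadratic_form_discriminant_identity:
  fixes a b c u u' v v' :: real
  shows "4 * (a * u'\<^sup>2 + b * (u' * v') + c * v'\<^sup>2) * (a * u\<^sup>2 + b * (u * v) + c * v\<^sup>2)
     - (a * (-2 * u * u') + b * (- (u * v' + u' * v)) + c * (-2 * v * v'))\<^sup>2
     = (4 * a * c - b\<^sup>2) * (u * v' - u' * v)\<^sup>2"
  by (simp add: power2_eq_square algebra_simps)

theorem mainTheorem8:
  fixes q :: "real \<Rightarrow> real" and q0 q1 :: real and c :: "nat \<Rightarrow> real"
    and lam :: real and \<phi> y2 \<theta> P Q R :: "real \<Rightarrow> real"
  assumes hq: "potential_hyp q q0 q1 c"
    and hlam: "lam > 0"
    and hphi: "is_frob_phi q q0 lam \<phi>"
    and hy2: "is_frob_y2 q q0 lam \<phi> y2"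
    and htheta: "\<theta> = (\<lambda>x. y2 x / frob_C q0)"
    and hU: "appell_solution q lam P Q R"
    and hP: "(P \<longlongrightarrow> sqrt lam) at_top"
    and hQ: "(Q \<longlongrightarrow> 0) at_top"
    and hR: "(R \<longlongrightarrow> 1 / sqrt lam) at_top"
  shows "(\<forall>x>0. 4 * P x * R x - (Q x)\<^sup>2 = 4) \<and>
         (\<forall>a b c' :: real.
            (\<forall>x>0. P x = a * (deriv \<theta> x)\<^sup>2 + b * (deriv \<theta> x * deriv \<phi> x) + c' * (deriv \<phi> x)\<^sup>2 \<and>
                   Q x = a * (-2 * \<theta> x * deriv \<theta> x) + b * (- (\<theta> x * deriv \<phi> x + deriv \<theta> x * \<phi> x))
                         + c' * (-2 * \<phi> x * deriv \<phi> x) \<and>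
                   R x = a * (\<theta> x)\<^sup>2 + b * (\<theta> x * \<phi> x) + c' * (\<phi> x)\<^sup>2)
            \<longrightarrow> 4 * a * c' - b\<^sup>2 = 4)"
proof -
  have disc: "\<forall>x>0. 4 * P x * R x - (Q x)\<^sup>2 = 4"
    using appell_discriminant_constant[OF hU hP hQ hR] hlam by simp
  have "q0 \<ge> -1/4" using hq by (simp add: potential_hyp_def)
  then have W: "wronskian \<theta> \<phi> 1 = -1"
    using wronskian_theta_phi[OF _ hphi hy2 htheta] by simp
  show ?thesis
  proof (intro conjI allI impI, goal_cases)
    case (1 x)
    with disc show ?case by blast
  next
    case (2 a b c')
    then have "4 * P 1 * R 1 - (Q 1)\<^sup>2 = (4 * a * c' - b\<^sup>2) * (wronskian \<theta> \<phi> 1)\<^sup>2"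
      using quadratic_form_discriminant_identity[of a "deriv \<theta> 1" b "deriv \<phi> 1" c' "\<theta> 1" "\<phi> 1"]
      by (simp add: wronskian_def mult.assoc)
    then show ?case using disc W by simp
  qed
qed

end
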